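(* Let $\Sigma$, $\mathcal S=\mathcal S^+\cup\mathcal S^-$, $\mathsf{ce}$, $\mathsf{Act}$, $\mathsf{Enc}$, $\Sigma_{\mathsf{Act}}$, $\widehat\Sigma$, $\widehat{\mathcal S}=\widehat{\mathcal S}^+\cup\widehat{\mathcal S}^-$ and $\widehat D$ be as in the context. For any two words $w_1,w_2\in\mathrm{pref}(\mathcal S)$, if the runs of $\widehat D$ on $\mathsf{Enc}(w_1)$ and on $\mathsf{Enc}(w_2)$ both exist and reach the same state, then $\mathsf{Act}(w_1)\sim\mathsf{Act}(w_2)$.
   Context: Let $\Sigma=\{\sigma_1,\dots,\sigma_k\}$ be a finite alphabet. A sample set is a pair of finite sets of words $\mathcal S^+,\mathcal S^-\subseteq\Sigma^*$ with $\mathcal S^+\cap\mathcal S^-=\emptyset$; write $\mathcal S=\mathcal S^+\cup\mathcal S^-$ and $\mathrm{pref}(\mathcal S)$ for the set of all prefixes (including $\varepsilon$ and the words themselves) of words of $\mathcal S$. We are given $\mathsf{ce}:\mathrm{pref}(\mathcal S)\to\mathbb N$ with $\mathsf{ce}(\varepsilon)=0$ and $\mathsf{ce}(w\sigma)-\mathsf{ce}(w)\in\{-1,0,+1\}$ whenever $w\sigma\in\mathrm{pref}(\mathcal S)$, $\sigma\in\Sigma$. For $d\in\mathbb N$, $\mathrm{sgn}(d)=0$ if $d=0$ and $1$ otherwise. For $w\in\mathrm{pref}(\mathcal S)$ define $\mathsf{Act}(w)\in\{0,1\}\times\{0,+1,-1,\bot\}^k$ by $\mathsf{Act}(w)[0]=\mathrm{sgn}(\mathsf{ce}(w))$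 and, for $i\in[1,k]$, $\mathsf{Act}(w)[i]=\mathsf{ce}(w\sigma_i)-\mathsf{ce}(w)$ if $w\sigma_i\in\mathrm{pref}(\mathcal S)$, and $\mathsf{Act}(w)[i]=\bot$ otherwise. For a tuple $\mathit{act}$ of this shape, $\mathit{act}|_{\sigma_i}$ denotes $\mathit{act}[i]$. Two such tuples $x,y$ are similar, $x\sim y$, if either $x[0]\neq y[0]$, or for all $i\in[1,k]$: $x[i]=\bot$ or $y[i]=\bot$ or $x[i]=y[i]$; otherwise $x\not\sim y$. Let $\widetilde\Sigma=\{\sigma^0,\sigma^1:\sigma\in\Sigma\}$ (fresh letters). For $w\in\mathrm{pref}(\mathcal S)$, $\mathsf{Enc}(\varepsilon)=\varepsilon$ and $\mathsf{Enc}(w)$ is the word over $\widetilde\Sigma$ of the same length with $\mathsf{Enc}(w)[0]=w[0]^0$ and $\mathsf{Enc}(w)[i]=w[i]^{\mathrm{sgn}(\mathsf{ce}(w[0\cdots i-1]))}$ for $i>0$ (positions indexed from $0$). Let $\Sigma_{\mathsf{Act}}=\{\mathsf{Act}(w):w\in\mathrm{pref}(\mathcal S)\}$, viewed as a set of fresh letters, and $\widehat\Sigma=\widetilde\Sigma\cup\Sigma_{\mathsf{Act}}$. The enriched sample over $\widehat\Sigma$ is: $\widehat{\mathcal S}^+=\{\mathsf{Enc}(w):w\in\mathcal S^+\}\cup\{\mathsf{Enc}(w)\cdot\mathsf{Act}(w):w\in\mathrm{pref}(\mathcal S)\}$ and $\widehat{\mathcal S}^-=\{\mathsf{Enc}(w):w\in\mathcal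 S^-\}\cup\{\mathsf{Enc}(w)\cdot\mathit{op}:w\in\mathrm{pref}(\mathcal S),\ \mathit{op}\in\Sigma_{\mathsf{Act}},\ \mathit{op}\not\sim\mathsf{Act}(w)\}$. $\widehat D=(Q,\widehat\Sigma,q_0,\delta,F)$ is a deterministic finite automaton with possibly partial transition function $\delta$ (a word is accepted iff its run exists and ends in $F$) such that: (i) $\widehat D$ accepts every word of $\widehat{\mathcal S}^+$ and rejects every word of $\widehat{\mathcal S}^-$; (ii) every transition comes from a prefix of a positive sample: whenever $\delta(q,x)=q'$ with $x\in\widehat\Sigma$, there is a word $u$ with $ux\in\mathrm{pref}(\widehat{\mathcal S}^+)$ and $\delta(q_0,u)=q$. (These properties hold e.g. for the output of the RPNI algorithm, which merges states of the prefix tree acceptor of $\widehat{\mathcal S}^+$ while staying consistent with $\widehat{\mathcal S}$.) *)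

theory Defs
  imports Main
begin

text \<open>Letters of the enriched alphabet: \<open>Tl \<sigma> b\<close> is \<sigma>^b (b \<in> {0,1}),
  \<open>ActL a\<close> is the fresh letter for an action tuple a.
  An action tuple is (sgn bit, list of k entries), where None stands for \<bottom>.\<close>

type_synonym act = "nat \<times> int option list"

datatype 'a hletter = Tl 'a nat | ActL act

definition prefs :: "'a list set \<Rightarrow> 'a list set" where
  "prefs A = {u. \<exists>v. u @ v \<in> A}"

definition sgnN :: "nat \<Rightarrow> nat" where
  "sgnN d = (if d = 0 then 0 else 1)"

definition Act :: "'a list \<Rightarrow> 'a list set \<Rightarrow> ('a list \<Rightarrow> nat) \<Rightarrow> 'a list \<Rightarrow> act" where
  "Act sig P ce w = (sgnN (ce w),
     map (\<lambda>\<sigma>. if w @ [\<sigma>] \<in> P then Some (int (ce (w @ [\<sigma>])) - int (ce w)) else None) sig)"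

definition similar :: "act \<Rightarrow> act \<Rightarrow> bool" where
  "similar x y \<longleftrightarrow> fst x \<noteq> fst y \<or>
     (\<forall>i < min (length (snd x)) (length (snd y)).
        snd x ! i = None \<or> snd y ! i = None \<or> snd x ! i = snd y ! i)"

definition Enc :: "('a list \<Rightarrow> nat) \<Rightarrow> 'a list \<Rightarrow> 'a hletter list" where
  "Enc ce w = map (\<lambda>i. Tl (w ! i) (if i = 0 then 0 else sgnN (ce (take i w)))) [0..<length w]"

definition SigAct :: "'a list \<Rightarrow> 'a list set \<Rightarrow> ('a list \<Rightarrow> nat) \<Rightarrow> act set" where
  "SigAct sig P ce = Act sig P ce ` P"

definition hatSpos :: "'a list \<Rightarrow> 'a list set \<Rightarrow> 'a list set \<Rightarrow> ('a list \<Rightarrow> nat) \<Rightarrow> 'a hletter list set" where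
  "hatSpos sig Sp Sn ce =
     Enc ce ` Sp \<union> {Enc ce w @ [ActL (Act sig (prefs (Sp \<union> Sn)) ce w)] | w. w \<in> prefs (Sp \<union> Sn)}"

definition hatSneg :: "'a list \<Rightarrow> 'a list set \<Rightarrow> 'a list set \<Rightarrow> ('a list \<Rightarrow> nat) \<Rightarrow> 'a hletter list set" where
  "hatSneg sig Sp Sn ce =
     Enc ce ` Sn \<union> {Enc ce w @ [ActL op] | w op. w \<in> prefs (Sp \<union> Sn)
        \<and> op \<in> SigAct sig (prefs (Sp \<union> Sn)) ce
        \<and> \<not> similar op (Act sig (prefs (Sp \<union> Sn)) ce w)}"

fun run :: "('s \<Rightarrow> 'l \<Rightarrow> 's option) \<Rightarrow> 's \<Rightarrow> 'l list \<Rightarrow> 's option" where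
  "run \<delta> q [] = Some q"
| "run \<delta> q (x # xs) = (case \<delta> q x of None \<Rightarrow> None | Some q' \<Rightarrow> run \<delta> q' xs)"

definition accepts :: "('s \<Rightarrow> 'l \<Rightarrow> 's option) \<Rightarrow> 's \<Rightarrow> 's set \<Rightarrow> 'l list \<Rightarrow> bool" where
  "accepts \<delta> q0 F u \<longleftrightarrow> (\<exists>q. run \<delta> q0 u = Some q \<and> q \<in> F)"

definition hatSigma :: "'a list \<Rightarrow> 'a list set \<Rightarrow> ('a list \<Rightarrow> nat) \<Rightarrow> 'a hletter set" where
  "hatSigma sig P ce = {Tl \<sigma> b | \<sigma> b. \<sigma> \<in> set sig \<and> b \<in> {0, 1}} \<union> ActL ` SigAct sig P ce"

end

theory Submission
  imports Defs
begin

text \<open>If \<open>Act(w\<^sub>1) \<not>\<sim> Act(w\<^sub>2)\<close>, then \<open>Enc(w\<^sub>1)\<cdot>Act(w\<^sub>1)\<close> is a positive and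
  \<open>Enc(w\<^sub>2)\<cdot>Act(w\<^sub>1)\<close> a negative sample word. A deterministic automaton reaching the same
  state on \<open>Enc(w\<^sub>1)\<close> and \<open>Enc(w\<^sub>2)\<close> cannot separate the two extensions by the same
  letter, so it would not be consistent with the enriched sample.\<close>

lemma run_append_Some:
  assumes "run \<delta> q xs = Some p"
  shows "run \<delta> q (xs @ ys) = run \<delta> p ys"
  using assms by (induction xs arbitrary: q) (auto split: option.splits)

lemma accepts_append_if_same_state:
  assumes "run \<delta> q0 u = Some p" and "run \<delta> q0 v = Some p"
  shows "accepts \<delta> q0 F (u @ x) \<longleftrightarrow> accepts \<delta> q0 F (v @ x)"
  using assms by (simp add: accepts_def run_append_Some)

lemma Enc_Act_in_hatSpos:
  assumes "w \<in> prefs (Sp \<union> Sn)"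
  shows "Enc ce w @ [ActL (Act sig (prefs (Sp \<union> Sn)) ce w)] \<in> hatSpos sig Sp Sn ce"
  using assms unfolding hatSpos_def by blast

lemma Enc_dissimilar_Act_in_hatSneg:
  assumes "w \<in> prefs (Sp \<union> Sn)" and "w' \<in> prefs (Sp \<union> Sn)"
    and "\<not> similar (Act sig (prefs (Sp \<union> Sn)) ce w') (Act sig (prefs (Sp \<union> Sn)) ce w)"
  shows "Enc ce w @ [ActL (Act sig (prefs (Sp \<union> Sn)) ce w')] \<in> hatSneg sig Sp Sn ce"
  using assms unfolding hatSneg_def SigAct_def by blast

theorem lemma1:
  fixes sig :: "'a list" and Sp Sn :: "'a list set" and ce :: "'a list \<Rightarrow> nat"
    and Q :: "'s set" and q0 :: 's and \<delta> :: "'s \<Rightarrow> 'a hletter \<Rightarrow> 's option" and F :: "'s set"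
    and w1 w2 :: "'a list" and q :: 's
  assumes sig: "distinct sig"
    and fin: "finite Sp" "finite Sn"
    and words: "\<forall>w \<in> Sp \<union> Sn. set w \<subseteq> set sig"
    and disj: "Sp \<inter> Sn = {}"
    and ce0: "ce [] = 0"
    and ce_step: "\<And>w \<sigma>. \<sigma> \<in> set sig \<Longrightarrow> w @ [\<sigma>] \<in> prefs (Sp \<union> Sn) \<Longrightarrow>
                   int (ce (w @ [\<sigma>])) - int (ce w) \<in> {-1, 0, 1}"
    and finQ: "finite Q" and q0Q: "q0 \<in> Q" and FQ: "F \<subseteq> Q"
    and \<delta>Q: "\<And>p x p'. p \<in> Q \<Longrightarrow> \<delta> p x = Some p' \<Longrightarrow> x \<in> hatSigma sig (prefs (Sp \<union> Sn)) ce \<and> p' \<in> Q"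
    and pos: "\<And>u. u \<in> hatSpos sig Sp Sn ce \<Longrightarrow> accepts \<delta> q0 F u"
    and neg: "\<And>u. u \<in> hatSneg sig Sp Sn ce \<Longrightarrow> \<not> accepts \<delta> q0 F u"
    and from_pos: "\<And>p x p'. \<delta> p x = Some p' \<Longrightarrow>
                     \<exists>u. u @ [x] \<in> prefs (hatSpos sig Sp Sn ce) \<and> run \<delta> q0 u = Some p"
    and w1: "w1 \<in> prefs (Sp \<union> Sn)" and w2: "w2 \<in> prefs (Sp \<union> Sn)"
    and r1: "run \<delta> q0 (Enc ce w1) = Some q" and r2: "run \<delta> q0 (Enc ce w2) = Some q"
  shows "similar (Act sig (prefs (Sp \<union> Sn)) ce w1) (Act sig (prefs (Sp \<union> Sn)) ce w2)"
proof (rule ccontr)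
  let ?a = "ActL (Act sig (prefs (Sp \<union> Sn)) ce w1)"
  assume "\<not> ?thesis"
  then have "\<not> accepts \<delta> q0 F (Enc ce w2 @ [?a])"
    using neg Enc_dissimilar_Act_in_hatSneg w1 w2 by blast
  moreover have "accepts \<delta> q0 F (Enc ce w1 @ [?a])"
    using pos Enc_Act_in_hatSpos w1 by blast
  ultimately show False
    using accepts_append_if_same_state[OF r1 r2] by blast
qed

end
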